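(* Let $R>1$, $\Omega=[-R,-1]\cup[1,R]\subset\mathbb{R}$, $h>0$, and for $x\in\mathbb{R}$ let $A_\Omega^{(h)}(x)=\int_\Omega\frac{h}{(y-x)^2+h^2}\,dy$. Then: (1) if $0<h<\sqrt{R+(R+1)\sqrt{R}}$, the maximizers of $A_\Omega^{(h)}$ over $\mathbb{R}$ are exactly the two points $$x_\pm=\pm\sqrt{\sqrt{R\left((R+1)^2+4h^2\right)}-(R+h^2)};$$ (2) if $h\ge\sqrt{R+(R+1)\sqrt{R}}$, then $x=0$ is the unique maximizer of $A_\Omega^{(h)}$ over $\mathbb{R}$. *)

theory Defs
  imports "HOL-Analysis.Analysis"
begin

definition Omega :: "real \<Rightarrow> real set" where
  "Omega R = {-R..-1} \<union> {1..R}"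

definition A_Omega :: "real \<Rightarrow> real \<Rightarrow> real \<Rightarrow> real" where
  "A_Omega R h x = (LINT y:Omega R|lborel. h / ((y - x)\<^sup>2 + h\<^sup>2))"

definition maximizers :: "(real \<Rightarrow> real) \<Rightarrow> real set" where
  "maximizers f = {x. \<forall>y. f y \<le> f x}"

end

theory Submission
  imports Defs
begin

(*
  The averaged Poisson kernel A(x) = \<integral>_\<Omega> h / ((y - x)^2 + h^2) dy of
  \<Omega> = [-R,-1] \<union> [1,R] has the closed form
     A(x) = arctan((R-x)/h) - arctan((1-x)/h) + arctan((-1-x)/h) - arctan((-R-x)/h),
  because arctan((y-x)/h) is an antiderivative of the kernel in y.
  Differentiating, the four kernel terms combine into
     A'(x) = 4hx(R-1) (M - (x^2+h^2+R)^2) / (positive),   M = R((R+1)^2 + 4h^2),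
  so on [0,\<infinity>) the function A increases while x^2 < c := sqrt M - (R+h^2) and
  decreases afterwards.  Since A is even, an abstract lemma on even unimodal
  functions identifies its maximizers as {b, -b} with b = sqrt(max c 0).
  Finally c > 0 holds exactly when h < sqrt(R + (R+1) sqrt R), which separates
  the two regimes of the theorem.
*)

lemma arctan_poisson_antiderivative:
  fixes h x y :: real
  assumes "h > 0"
  shows "((\<lambda>y. arctan ((y - x) / h)) has_real_derivative h / ((y - x)\<^sup>2 + h\<^sup>2)) (at y)"
proof -
  have "((\<lambda>y. arctan ((y - x) / h)) has_real_derivative
          1 / (1 + ((y - x) / h)\<^sup>2) * (1 / h)) (at y)"
    using assms by (auto intro!: derivative_eq_intros simp: field_simps)
  moreover have "1 / (1 + ((y - x) / h)\<^sup>2) * (1 / h) = h / ((y - x)\<^sup>2 + h\<^sup>2)"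
    using assms by (simp add: field_simps power2_eq_square)
  ultimately show ?thesis by simp
qed

lemma poisson_kernel_continuous:
  fixes h x :: real
  assumes "h > 0"
  shows "continuous_on S (\<lambda>y. h / ((y - x)\<^sup>2 + h\<^sup>2))"
  using assms by (intro continuous_intros) (auto simp: add_pos_pos)

lemma poisson_integral_interval:
  fixes h x a b :: real
  assumes "h > 0" "a \<le> b"
  shows "(LINT y:{a..b}|lborel. h / ((y - x)\<^sup>2 + h\<^sup>2))
           = arctan ((b - x) / h) - arctan ((a - x) / h)"
  unfolding set_lebesgue_integral_def
  using arctan_poisson_antiderivative[OF assms(1)] poisson_kernel_continuous[OF assms(1)]
  by (intro integral_FTC_atLeastAtMost[OF assms(2)])
     (auto simp: has_real_derivative_iff_has_vector_derivative[symmetric]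
           intro: has_field_derivative_at_within)

definition A_arctan :: "real \<Rightarrow> real \<Rightarrow> real \<Rightarrow> real" where
  "A_arctan R h x = arctan ((R - x) / h) - arctan ((1 - x) / h)
                    + arctan ((-1 - x) / h) - arctan ((-R - x) / h)"

lemma A_Omega_eq_A_arctan:
  assumes "R > 1" "h > 0"
  shows "A_Omega R h = A_arctan R h"
proof
  fix x
  have "A_Omega R h x = (LINT y:{-R..-1}|lborel. h / ((y - x)\<^sup>2 + h\<^sup>2))
                        + (LINT y:{1..R}|lborel. h / ((y - x)\<^sup>2 + h\<^sup>2))"
    unfolding A_Omega_def Omega_def using assms
    by (intro set_integral_Un) (auto intro!: borel_integrable_atLeastAtMost' poisson_kernel_continuous)
  also have "\<dots> = A_arctan R h x"
    using assms by (simp add: poisson_integral_interval A_arctan_def)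
  finally show "A_Omega R h x = A_arctan R h x" .
qed

text \<open>The closed form is even, reflecting the symmetry of \<open>\<Omega>\<close> under y \<mapsto> -y.\<close>
lemma A_arctan_even: "A_arctan R h (-x) = A_arctan R h x"
proof -
  have reflect: "arctan ((a - - x) / h) = - arctan ((-a - x) / h)" for a
  proof -
    have "(a - - x) / h = - ((-a - x) / h)" by (simp add: add_divide_distrib diff_divide_distrib)
    then show ?thesis by (simp add: arctan_minus)
  qed
  show ?thesis
    unfolding A_arctan_def using reflect[of R] reflect[of 1] reflect[of "-1"] reflect[of "-R"]
    by simp
qed

lemma arctan_reflected_deriv:
  fixes h x c :: real
  assumes "h > 0"
  shows "((\<lambda>x. arctan ((c - x) / h)) has_real_derivative - h / ((c - x)\<^sup>2 + h\<^sup>2)) (at x)"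
proof -
  have "((\<lambda>x. arctan ((c - x) / h)) has_real_derivative
          1 / (1 + ((c - x) / h)\<^sup>2) * (-1 / h)) (at x)"
    using assms by (auto intro!: derivative_eq_intros simp: field_simps)
  moreover have "1 / (1 + ((c - x) / h)\<^sup>2) * (-1 / h) = - h / ((c - x)\<^sup>2 + h\<^sup>2)"
    using assms by (simp add: field_simps power2_eq_square)
  ultimately show ?thesis by simp
qed

definition A_deriv :: "real \<Rightarrow> real \<Rightarrow> real \<Rightarrow> real" where
  "A_deriv R h x = 4 * h * x * (R - 1) * (R * ((R + 1)\<^sup>2 + 4 * h\<^sup>2) - (x\<^sup>2 + h\<^sup>2 + R)\<^sup>2) /
     ((((1 - x)\<^sup>2 + h\<^sup>2) * ((1 + x)\<^sup>2 + h\<^sup>2)) * (((R - x)\<^sup>2 + h\<^sup>2) * ((R + x)\<^sup>2 + h\<^sup>2)))"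

lemma sq_plus_pos: "(h::real) > 0 \<Longrightarrow> t\<^sup>2 + h\<^sup>2 > 0"
  by (simp add: add_nonneg_pos)

text \<open>The four kernel terms of the derivative combine into a single fraction whose
  numerator exposes the sign-determining factor M - (x^2 + h^2 + R)^2.\<close>
lemma kernel_sum_eq_A_deriv:
  fixes R h x :: real
  assumes "h > 0"
  shows "- h / ((R - x)\<^sup>2 + h\<^sup>2) + h / ((1 - x)\<^sup>2 + h\<^sup>2)
           - h / ((-1 - x)\<^sup>2 + h\<^sup>2) + h / ((-R - x)\<^sup>2 + h\<^sup>2) = A_deriv R h x"
proof -
  define a where "a = (R - x)\<^sup>2 + h\<^sup>2"
  define b where "b = (1 - x)\<^sup>2 + h\<^sup>2"
  define c where "c = (1 + x)\<^sup>2 + h\<^sup>2"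
  define d where "d = (R + x)\<^sup>2 + h\<^sup>2"
  have pos: "a > 0" "b > 0" "c > 0" "d > 0"
    using assms unfolding a_def b_def c_def d_def by (auto intro: sq_plus_pos)
  have reflect: "(-1 - x)\<^sup>2 = (1 + x)\<^sup>2" "(-R - x)\<^sup>2 = (R + x)\<^sup>2"
    by (simp_all add: power2_eq_square algebra_simps)
  have cb: "c - b = 4 * x" and ad: "a - d = -4 * R * x"
    unfolding a_def b_def c_def d_def by (simp_all add: power2_eq_square algebra_simps)
  have numerator: "a * d - R * (b * c) = (R - 1) * (R * ((R + 1)\<^sup>2 + 4 * h\<^sup>2) - (x\<^sup>2 + h\<^sup>2 + R)\<^sup>2)"
    unfolding a_def b_def c_def d_def by (simp add: power2_eq_square algebra_simps)
  have "- h / a + h / b - h / c + h / d = h * (c - b) / (b * c) + h * (a - d) / (a * d)"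
    using pos by (simp add: field_simps)
  also have "\<dots> = 4 * h * x * (a * d - R * (b * c)) / ((b * c) * (a * d))"
    unfolding cb ad using pos by (simp add: field_simps)
  also have "\<dots> = 4 * h * x * ((R - 1) * (R * ((R + 1)\<^sup>2 + 4 * h\<^sup>2) - (x\<^sup>2 + h\<^sup>2 + R)\<^sup>2))
                      / ((b * c) * (a * d))"
    by (simp only: numerator)
  also have "\<dots> = A_deriv R h x"
    unfolding A_deriv_def a_def b_def c_def d_def by (simp add: mult.assoc)
  finally show ?thesis unfolding reflect a_def b_def c_def d_def .
qed

lemma A_arctan_has_deriv:
  assumes "h > 0"
  shows "(A_arctan R h has_real_derivative A_deriv R h x) (at x)"
proof -
  have "((\<lambda>x. arctan ((R - x) / h) - arctan ((1 - x) / h)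
               + arctan ((-1 - x) / h) - arctan ((-R - x) / h)) has_real_derivative
         - h / ((R - x)\<^sup>2 + h\<^sup>2) - - h / ((1 - x)\<^sup>2 + h\<^sup>2)
         + - h / ((-1 - x)\<^sup>2 + h\<^sup>2) - - h / ((-R - x)\<^sup>2 + h\<^sup>2)) (at x)"
    using assms by (intro DERIV_diff DERIV_add arctan_reflected_deriv)
  then show ?thesis
    using kernel_sum_eq_A_deriv[OF assms, of R x] unfolding A_arctan_def[abs_def] by simp
qed

lemma A_deriv_sign:
  assumes "R > 1" "h > 0" "x > 0"
  shows "(x\<^sup>2 + h\<^sup>2 + R)\<^sup>2 < R * ((R + 1)\<^sup>2 + 4 * h\<^sup>2) \<Longrightarrow> A_deriv R h x > 0"
    and "(x\<^sup>2 + h\<^sup>2 + R)\<^sup>2 > R * ((R + 1)\<^sup>2 + 4 * h\<^sup>2) \<Longrightarrow> A_deriv R h x < 0"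
proof -
  have den: "(((1 - x)\<^sup>2 + h\<^sup>2) * ((1 + x)\<^sup>2 + h\<^sup>2)) * (((R - x)\<^sup>2 + h\<^sup>2) * ((R + x)\<^sup>2 + h\<^sup>2)) > 0"
    using assms by (intro mult_pos_pos sq_plus_pos)
  have factor: "4 * h * x * (R - 1) > 0" using assms by simp
  show "(x\<^sup>2 + h\<^sup>2 + R)\<^sup>2 < R * ((R + 1)\<^sup>2 + 4 * h\<^sup>2) \<Longrightarrow> A_deriv R h x > 0"
    unfolding A_deriv_def by (intro divide_pos_pos[OF _ den] mult_pos_pos[OF factor]) auto
  show "(x\<^sup>2 + h\<^sup>2 + R)\<^sup>2 > R * ((R + 1)\<^sup>2 + 4 * h\<^sup>2) \<Longrightarrow> A_deriv R h x < 0"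
    unfolding A_deriv_def by (intro divide_neg_pos[OF _ den] mult_pos_neg[OF factor]) auto
qed

lemma A_arctan_continuous: "h > 0 \<Longrightarrow> continuous_on S (A_arctan R h)"
  using A_arctan_has_deriv by (meson DERIV_isCont continuous_at_imp_continuous_on)

lemma A_arctan_strict_increasing:
  assumes "R > 1" "h > 0" "0 \<le> u" "u < v"
    and "\<And>x. u < x \<Longrightarrow> x < v \<Longrightarrow> (x\<^sup>2 + h\<^sup>2 + R)\<^sup>2 < R * ((R + 1)\<^sup>2 + 4 * h\<^sup>2)"
  shows "A_arctan R h u < A_arctan R h v"
  using assms(4)
  by (rule DERIV_pos_imp_increasing_open)
     (use A_arctan_has_deriv[OF assms(2)] A_deriv_sign(1)[OF assms(1,2)] assms
          A_arctan_continuous[OF assms(2)] in force)+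

lemma A_arctan_strict_decreasing:
  assumes "R > 1" "h > 0" "0 \<le> u" "u < v"
    and "\<And>x. u < x \<Longrightarrow> x < v \<Longrightarrow> (x\<^sup>2 + h\<^sup>2 + R)\<^sup>2 > R * ((R + 1)\<^sup>2 + 4 * h\<^sup>2)"
  shows "A_arctan R h u > A_arctan R h v"
  using assms(4)
  by (rule DERIV_neg_imp_decreasing_open)
     (use A_arctan_has_deriv[OF assms(2)] A_deriv_sign(2)[OF assms(1,2)] assms
          A_arctan_continuous[OF assms(2)] in force)+

lemma maximizers_even_unimodal:
  fixes g :: "real \<Rightarrow> real" and b :: real
  assumes b: "b \<ge> 0" and even: "\<And>x. g (-x) = g x"
    and inc: "\<And>u v. 0 \<le> u \<Longrightarrow> u < v \<Longrightarrow> v \<le> b \<Longrightarrow> g u < g v"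
    and dec: "\<And>u v. b \<le> u \<Longrightarrow> u < v \<Longrightarrow> g u > g v"
  shows "maximizers g = {b, -b}"
proof -
  have g_abs: "g y = g \<bar>y\<bar>" for y using even[of y] by (cases "y \<ge> 0") auto
  have below_peak: "g y < g b" if "\<bar>y\<bar> \<noteq> b" for y
  proof -
    from that consider "\<bar>y\<bar> < b" | "\<bar>y\<bar> > b" by linarith
    then show ?thesis
      by cases (use inc[of "\<bar>y\<bar>" b] dec[of b "\<bar>y\<bar>"] g_abs[of y] in auto)
  qed
  have le_peak: "g y \<le> g b" for y using below_peak[of y] g_abs[of y] by (cases "\<bar>y\<bar> = b") auto
  show ?thesis
  proof (rule set_eqI)
    fix x
    have "x \<in> maximizers g \<longleftrightarrow> g b \<le> g x"
      unfolding maximizers_def using le_peak by (auto intro: order_trans)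
    also have "\<dots> \<longleftrightarrow> \<bar>x\<bar> = b" using below_peak[of x] g_abs[of x] by (cases "\<bar>x\<bar> = b") auto
    also have "\<dots> \<longleftrightarrow> x \<in> {b, -b}" using b by auto
    finally show "x \<in> maximizers g \<longleftrightarrow> x \<in> {b, -b}" .
  qed
qed

text \<open>With M = R((R+1)^2 + 4h^2) and c = sqrt M - (R + h^2), the maximizers of A are
  \<plusminus>b for b = sqrt(max c 0): the sign factor M - (x^2+h^2+R)^2 is positive exactly for
  x^2 < c, since x^2 + h^2 + R > 0.\<close>
lemma maximizers_A_Omega:
  fixes R h b :: real
  defines "c \<equiv> sqrt (R * ((R + 1)\<^sup>2 + 4 * h\<^sup>2)) - (R + h\<^sup>2)"
  assumes "R > 1" "h > 0" and b: "b \<ge> 0" "b\<^sup>2 = max c 0"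
  shows "maximizers (A_Omega R h) = {b, -b}"
proof -
  define M where "M = R * ((R + 1)\<^sup>2 + 4 * h\<^sup>2)"
  have M: "M \<ge> 0" using assms(2) unfolding M_def by simp
  have sign_pos: "(x\<^sup>2 + h\<^sup>2 + R)\<^sup>2 < M" if "x\<^sup>2 < c" for x :: real
  proof -
    have "x\<^sup>2 + h\<^sup>2 + R < sqrt M" using that unfolding c_def M_def by simp
    then have "(x\<^sup>2 + h\<^sup>2 + R)\<^sup>2 < (sqrt M)\<^sup>2" using assms(2) by (intro power_strict_mono) auto
    then show ?thesis using M by simp
  qed
  have sign_neg: "(x\<^sup>2 + h\<^sup>2 + R)\<^sup>2 > M" if "x\<^sup>2 > c" for x :: real
  proof -
    have "sqrt M < x\<^sup>2 + h\<^sup>2 + R" using that unfolding c_def M_def by simp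
    then have "(sqrt M)\<^sup>2 < (x\<^sup>2 + h\<^sup>2 + R)\<^sup>2" using M by (intro power_strict_mono) auto
    then show ?thesis using M by simp
  qed
  show ?thesis
    unfolding A_Omega_eq_A_arctan[OF assms(2,3)]
  proof (rule maximizers_even_unimodal[where g = "A_arctan R h", OF b(1) A_arctan_even])
    fix u v :: real assume uv: "0 \<le> u" "u < v" "v \<le> b"
    show "A_arctan R h u < A_arctan R h v"
    proof (rule A_arctan_strict_increasing[OF assms(2,3) uv(1,2)])
      fix x assume "u < x" "x < v"
      then have "x\<^sup>2 < b\<^sup>2" using uv by (intro power_strict_mono) auto
      moreover have "0 < b\<^sup>2" using \<open>x\<^sup>2 < b\<^sup>2\<close> by (metis zero_le_power2 le_less_trans)
      ultimately have "x\<^sup>2 < c" using b(2) by (auto simp: max_def split: if_splits)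
      then show "(x\<^sup>2 + h\<^sup>2 + R)\<^sup>2 < R * ((R + 1)\<^sup>2 + 4 * h\<^sup>2)" using sign_pos M_def by simp
    qed
  next
    fix u v :: real assume uv: "b \<le> u" "u < v"
    show "A_arctan R h u > A_arctan R h v"
    proof (rule A_arctan_strict_decreasing[OF assms(2,3) _ uv(2)])
      show "0 \<le> u" using uv b by simp
      fix x assume "u < x" "x < v"
      then have "b\<^sup>2 < x\<^sup>2" using uv b by (intro power_strict_mono) auto
      then have "x\<^sup>2 > c" using b(2) by simp
      then show "(x\<^sup>2 + h\<^sup>2 + R)\<^sup>2 > R * ((R + 1)\<^sup>2 + 4 * h\<^sup>2)" using sign_neg M_def by simp
    qed
  qed
qed

lemma less_sqrt_iff_square_less:
  fixes a y :: real
  assumes "a \<ge> 0"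
  shows "a < sqrt y \<longleftrightarrow> a\<^sup>2 < y"
  using real_sqrt_less_iff[of "a\<^sup>2" y] assms by simp

lemma square_less_square_iff_abs_less:
  fixes x y :: real
  assumes "y \<ge> 0"
  shows "x\<^sup>2 < y\<^sup>2 \<longleftrightarrow> \<bar>x\<bar> < y"
  using abs_le_square_iff[of y x] assms by (auto simp: not_le[symmetric])

text \<open>The peak moves away from 0 exactly below the critical height
  h = sqrt(R + (R+1) sqrt R): writing q = sqrt R, the condition c > 0 reads
  (h^2 - R)^2 < ((R+1) q)^2, i.e. -(R+1)q < h^2 - R < (R+1)q, and the lower
  bound is automatic because R < (R+1)q.\<close>
lemma peak_positive_iff:
  fixes R h :: real
  assumes "R > 1" "h > 0"
  shows "sqrt (R * ((R + 1)\<^sup>2 + 4 * h\<^sup>2)) - (R + h\<^sup>2) > 0 \<longleftrightarrow> h < sqrt (R + (R + 1) * sqrt R)"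
proof -
  define q where "q = sqrt R"
  have q: "q > 1" "q\<^sup>2 = R" using assms(1) unfolding q_def by auto
  have R_lt: "R < (R + 1) * q"
  proof -
    have "R * 1 < R * q" using q assms(1) by (intro mult_strict_left_mono) auto
    also have "\<dots> \<le> (R + 1) * q" using q by (intro mult_right_mono) auto
    finally show ?thesis by simp
  qed
  have "sqrt (R * ((R + 1)\<^sup>2 + 4 * h\<^sup>2)) - (R + h\<^sup>2) > 0
          \<longleftrightarrow> (R + h\<^sup>2)\<^sup>2 < R * ((R + 1)\<^sup>2 + 4 * h\<^sup>2)"
    using less_sqrt_iff_square_less[of "R + h\<^sup>2"] assms by simp
  also have "\<dots> \<longleftrightarrow> (h\<^sup>2 - R)\<^sup>2 < ((R + 1) * q)\<^sup>2"
    unfolding power_mult_distrib q(2) by (simp add: power2_eq_square algebra_simps)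
  also have "\<dots> \<longleftrightarrow> \<bar>h\<^sup>2 - R\<bar> < (R + 1) * q"
    using square_less_square_iff_abs_less[of "(R + 1) * q" "h\<^sup>2 - R"] q assms(1) by simp
  also have "\<dots> \<longleftrightarrow> h\<^sup>2 < R + (R + 1) * q"
    using R_lt zero_le_power2[of h] unfolding abs_less_iff by linarith
  also have "\<dots> \<longleftrightarrow> h < sqrt (R + (R + 1) * sqrt R)"
    unfolding q_def using less_sqrt_iff_square_less[of h] assms(2) by simp
  finally show ?thesis .
qed

theorem mainTheorem8:
  fixes R h :: real
  assumes "R > 1" and "h > 0"
  shows "(h < sqrt (R + (R + 1) * sqrt R) \<longrightarrow>
           maximizers (A_Omega R h) =
             {sqrt (sqrt (R * ((R + 1)\<^sup>2 + 4 * h\<^sup>2)) - (R + h\<^sup>2)),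
              - sqrt (sqrt (R * ((R + 1)\<^sup>2 + 4 * h\<^sup>2)) - (R + h\<^sup>2))})
       \<and> (h \<ge> sqrt (R + (R + 1) * sqrt R) \<longrightarrow> maximizers (A_Omega R h) = {0})"
proof (intro conjI impI)
  define c where "c = sqrt (R * ((R + 1)\<^sup>2 + 4 * h\<^sup>2)) - (R + h\<^sup>2)"
  assume "h < sqrt (R + (R + 1) * sqrt R)"
  then have "c > 0" using peak_positive_iff[OF assms] unfolding c_def by simp
  then have "maximizers (A_Omega R h) = {sqrt c, - sqrt c}"
    using maximizers_A_Omega[OF assms, of "sqrt c"] unfolding c_def by simp
  then show "maximizers (A_Omega R h) =
             {sqrt (sqrt (R * ((R + 1)\<^sup>2 + 4 * h\<^sup>2)) - (R + h\<^sup>2)),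
              - sqrt (sqrt (R * ((R + 1)\<^sup>2 + 4 * h\<^sup>2)) - (R + h\<^sup>2))}"
    unfolding c_def .
next
  assume "h \<ge> sqrt (R + (R + 1) * sqrt R)"
  then have "sqrt (R * ((R + 1)\<^sup>2 + 4 * h\<^sup>2)) - (R + h\<^sup>2) \<le> 0"
    using peak_positive_iff[OF assms] by simp
  then show "maximizers (A_Omega R h) = {0}"
    using maximizers_A_Omega[OF assms, of 0] by simp
qed

end
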